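(* Let $h:\mathbb{R}\to(0,\infty)$ be continuously differentiable and monotone, with $h(x)\to k_{-\infty}$ as $x\to-\infty$ and $h(x)\to k_{+\infty}$ as $x\to+\infty$. Then $$T\ \ge\ \mathrm{sech}^2\left\{\frac12\left|\ln\frac{k_{+\infty}}{k_{-\infty}}\right|+\frac12\int_{-\infty}^{\infty}\frac{|k^2-h^2|}{h}\,\mathrm{d}x\right\}.$$
   Context: Standing setup: $k^2:\mathbb{R}\to\mathbb{R}$ is a piecewise continuous function (it may be negative somewhere) with $k^2(x)\to k_{\pm\infty}^2$ as $x\to\pm\infty$, where $k_{\pm\infty}>0$ and $k^2-k_{\pm\infty}^2$ is integrable near $\pm\infty$. For the equation $u''+k^2(x)u=0$ there is a solution with $u(x)=e^{ik_{-\infty}x}+r\,e^{-ik_{-\infty}x}+o(1)$ as $x\to-\infty$ and $u(x)=\tau\,e^{ik_{+\infty}x}+o(1)$ as $x\to+\infty$; the transmission probability is $T=(k_{+\infty}/k_{-\infty})|\tau|^2$. Here $\mathrm{sech}=1/\cosh$, and if the integral equals $+\infty$ the bound is read as the trivial statement $T\ge 0$. *)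

theory Defs
  imports "HOL-Analysis.Analysis"
begin

definition sech :: "real \<Rightarrow> real" where
  "sech x = 1 / cosh x"

definition locally_finite_set :: "real set \<Rightarrow> bool" where
  "locally_finite_set S \<longleftrightarrow> (\<forall>a b. finite (S \<inter> {a..b}))"

definition piecewise_continuous :: "(real \<Rightarrow> real) \<Rightarrow> bool" where
  "piecewise_continuous f \<longleftrightarrow>
     (\<exists>S. locally_finite_set S \<and> continuous_on (- S) f \<and>
        (\<forall>x\<in>S. \<exists>l. (f \<longlongrightarrow> l) (at_left x)) \<and>
        (\<forall>x\<in>S. \<exists>l. (f \<longlongrightarrow> l) (at_right x)))"

definition is_solution :: "(real \<Rightarrow> real) \<Rightarrow> (real \<Rightarrow> complex) \<Rightarrow> bool" where
  "is_solution k2 u \<longleftrightarrow>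
     (\<exists>u' S. locally_finite_set S \<and>
        (\<forall>x. (u has_vector_derivative u' x) (at x)) \<and>
        continuous_on UNIV u' \<and>
        (\<forall>x. x \<notin> S \<longrightarrow>
           (u' has_vector_derivative (- (complex_of_real (k2 x) * u x))) (at x)))"

end

theory Submission
  imports Defs
begin

text \<open>
  Write u' for the derivative of the solution and
  c = Im (cnj u * u') for the flux, which is constant (Wronskian identity).  Along the
  solution consider the energy E = h |u|^2 + |u'|^2 / h.  It dominates 2|c|, and a direct
  computation gives |E'| <= (|h'| + |h^2 - k^2|) / h * sqrt (E^2 - 4 c^2) away from the jump
  points of k^2.  Hence the potential Lambda(E) = ln (E + sqrt (E^2 - 4 c^2)) varies on any
  interval by at most the integral of |h'|/h + |k^2 - h^2|/h, i.e. by at most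
  |ln (k_+/k_-)| + I since h is monotone.
  Near +-infinity the solution is close to a plane wave a e^(ikx) + b e^(-ikx) and, since u''
  is bounded there, u' is close to the derivative of that wave.  Reading off the amplitudes
  gives E -> 2k (|a|^2 + |b|^2) and c = k (|a|^2 - |b|^2) at both ends, so c = k_+ |tau|^2,
  E(-infinity) = 4 k_- - 2c and E(+infinity) = 2c.  Comparing Lambda at both ends yields an
  inequality that is equivalent to the sech^2 bound.
\<close>

section \<open>Elementary real analysis\<close>

lemma locally_finite_set_finite: "locally_finite_set S \<Longrightarrow> finite (S \<inter> {a..b})"
  by (simp add: locally_finite_set_def)

lemma locally_finite_set_countable:
  assumes "locally_finite_set S" shows "countable S"
proof -
  have "S = (\<Union>n::nat. S \<inter> {- real n .. real n})"
  proof (auto)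
    fix x assume "x \<in> S"
    obtain n::nat where "\<bar>x\<bar> \<le> real n" using real_arch_simple by blast
    thus "\<exists>n. - real n \<le> x \<and> x \<le> real n" by (intro exI[of _ n]) auto
  qed
  moreover have "countable (\<Union>n::nat. S \<inter> {- real n .. real n})"
    using locally_finite_set_finite[OF assms] by (intro countable_UN) (auto intro: countable_finite)
  ultimately show ?thesis by simp
qed

lemma piecewise_continuous_borel:
  assumes "piecewise_continuous f" shows "f \<in> borel_measurable borel"
proof -
  obtain S where "locally_finite_set S" "continuous_on (- S) f"
    using assms unfolding piecewise_continuous_def by blast
  then show ?thesis
    using borel_measurable_continuous_countable_exceptions locally_finite_set_countable by blast
qed

lemma finite_nn_integral_on_intervals:
  fixes f :: "real \<Rightarrow> real"
  assumes fm: "f \<in> borel_measurable borel" and fnn: "\<And>x. 0 \<le> f x"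
    and fin: "(\<integral>\<^sup>+ x. ennreal (f x) \<partial>lborel) < \<infinity>"
  shows "f integrable_on {x..y}"
    and "integral {x..y} f \<le> enn2real (\<integral>\<^sup>+ x. ennreal (f x) \<partial>lborel)"
proof -
  have fint: "f integrable_on UNIV" by (rule nn_integral_integrable_on[OF fm fnn fin])
  then show fxy: "f integrable_on {x..y}" using integrable_on_subinterval by blast
  have "(\<integral>\<^sup>+ x. f x \<partial>lborel) = integral UNIV f" by (rule nn_integral_lborel_eq_integral[OF fm fnn fin])
  then have "enn2real (\<integral>\<^sup>+ x. ennreal (f x) \<partial>lborel) = integral UNIV f"
    using integral_nonneg[OF fint] fnn by simp
  moreover have "integral {x..y} f \<le> integral UNIV f"
    using fint fxy fnn by (intro integral_subset_le) auto
  ultimately show "integral {x..y} f \<le> enn2real (\<integral>\<^sup>+ x. ennreal (f x) \<partial>lborel)" by simp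
qed

lemma mismatch_on_intervals:
  fixes k2 h :: "real \<Rightarrow> real"
  assumes k2: "piecewise_continuous k2" and ch: "continuous_on UNIV h" and hp: "\<forall>x. h x > 0"
    and fin: "(\<integral>\<^sup>+ x. ennreal (\<bar>k2 x - (h x)\<^sup>2\<bar> / h x) \<partial>lborel) < \<infinity>"
  shows "(\<lambda>t. \<bar>k2 t - (h t)\<^sup>2\<bar> / h t) integrable_on {x..y}"
    and "integral {x..y} (\<lambda>t. \<bar>k2 t - (h t)\<^sup>2\<bar> / h t)
           \<le> enn2real (\<integral>\<^sup>+ x. ennreal (\<bar>k2 x - (h x)\<^sup>2\<bar> / h x) \<partial>lborel)"
proof -
  have fm: "(\<lambda>t. \<bar>k2 t - (h t)\<^sup>2\<bar> / h t) \<in> borel_measurable borel"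
    using piecewise_continuous_borel[OF k2] borel_measurable_continuous_onI[OF ch] by measurable
  have fnn: "0 \<le> \<bar>k2 t - (h t)\<^sup>2\<bar> / h t" for t using hp by (simp add: less_imp_le)
  show "(\<lambda>t. \<bar>k2 t - (h t)\<^sup>2\<bar> / h t) integrable_on {x..y}"
    using finite_nn_integral_on_intervals(1)[OF fm fnn fin] .
  show "integral {x..y} (\<lambda>t. \<bar>k2 t - (h t)\<^sup>2\<bar> / h t)
      \<le> enn2real (\<integral>\<^sup>+ x. ennreal (\<bar>k2 x - (h x)\<^sup>2\<bar> / h x) \<partial>lborel)"
    using finite_nn_integral_on_intervals(2)[OF fm fnn fin] .
qed

lemma monotone_log_gauge:
  fixes h h' :: "real \<Rightarrow> real"
  assumes mon: "mono h \<or> antimono h" and hp: "\<forall>x. h x > 0"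
    and dh: "\<forall>x. (h has_real_derivative h' x) (at x)"
    and hb: "(h \<longlongrightarrow> km) at_bot" and ht: "(h \<longlongrightarrow> kp) at_top"
    and km: "km > 0" and kp: "kp > 0"
  obtains \<sigma> :: real where "\<forall>x. \<sigma> * h' x = \<bar>h' x\<bar>"
    and "\<forall>x y. \<sigma> * (ln (h y) - ln (h x)) \<le> \<bar>ln (kp / km)\<bar>"
proof (cases "mono h")
  case True
  have "0 \<le> h' x" for x
    by (rule mono_on_imp_deriv_nonneg[of UNIV h]) (use True dh in auto)
  moreover have "ln (h y) - ln (h x) \<le> \<bar>ln (kp / km)\<bar>" for x y
  proof -
    have "h y \<le> kp"
      by (rule tendsto_lowerbound[OF ht]) (auto simp: eventually_at_top_linorder intro!: exI[of _ y] monoD[OF True])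
    moreover have "km \<le> h x"
      by (rule tendsto_upperbound[OF hb]) (auto simp: eventually_at_bot_linorder intro!: exI[of _ x] monoD[OF True])
    ultimately have "ln (h y) \<le> ln kp" "ln km \<le> ln (h x)" using hp km kp by auto
    then have "ln (h y) - ln (h x) \<le> ln (kp / km)" using km kp by (simp add: ln_div)
    then show ?thesis using abs_ge_self[of "ln (kp / km)"] by linarith
  qed
  ultimately show ?thesis by (intro that[of 1]) simp_all
next
  case False
  then have am: "antimono h" using mon by blast
  have mn: "mono (\<lambda>x. - h x)" using am by (auto simp: mono_def antimono_def)
  have "0 \<le> - h' x" for x
    by (rule mono_on_imp_deriv_nonneg[of UNIV "\<lambda>x. - h x"]) (use mn DERIV_minus[OF dh[rule_format]] in auto)
  moreover have "ln (h x) - ln (h y) \<le> \<bar>ln (kp / km)\<bar>" for x y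
  proof -
    have "kp \<le> h y"
      by (rule tendsto_upperbound[OF ht]) (auto simp: eventually_at_top_linorder intro!: exI[of _ y] antimonoD[OF am])
    moreover have "h x \<le> km"
      by (rule tendsto_lowerbound[OF hb]) (auto simp: eventually_at_bot_linorder intro!: exI[of _ x] antimonoD[OF am])
    ultimately have "ln kp \<le> ln (h y)" "ln (h x) \<le> ln km" using hp km kp by auto
    then have "ln (h x) - ln (h y) \<le> - ln (kp / km)" using km kp by (simp add: ln_div)
    then show ?thesis using abs_ge_minus_self[of "ln (kp / km)"] by linarith
  qed
  ultimately show ?thesis by (intro that[of "-1"]) (simp_all add: abs_of_nonpos)
qed

lemma lipschitz_from_derivative_bound:
  fixes v' w :: "real \<Rightarrow> complex"
  assumes cont: "continuous_on UNIV v'" and lf: "locally_finite_set S"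
    and der: "\<forall>t. t \<notin> S \<longrightarrow> (v' has_vector_derivative w t) (at t)"
    and xy: "x \<le> y" and bnd: "\<forall>t\<in>{x..y}. cmod (w t) \<le> M"
  shows "cmod (v' y - v' x) \<le> M * (y - x)"
proof -
  have M0: "0 \<le> M" using bnd xy by (meson atLeastAtMost_iff norm_ge_zero order.trans order_refl)
  have "(w has_integral (v' y - v' x)) {x..y}"
  proof (rule fundamental_theorem_of_calculus_interior_strong[OF locally_finite_set_finite[OF lf] xy])
    show "continuous_on {x..y} v'" using continuous_on_subset[OF cont] by blast
    fix t assume "t \<in> {x<..<y} - S \<inter> {x..y}"
    then show "(v' has_vector_derivative w t) (at t)" using der by auto
  qed
  then have "((\<lambda>t. if t \<in> S then 0 else w t) has_integral (v' y - v' x)) (cbox x y)"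
    unfolding cbox_interval
    by (rule has_integral_spike_finite[OF locally_finite_set_finite[OF lf, of x y], rotated]) auto
  moreover have "\<And>t. t \<in> cbox x y \<Longrightarrow> norm (if t \<in> S then 0 else w t) \<le> M"
    using bnd M0 by (simp add: cbox_interval)
  ultimately have "cmod (v' y - v' x) \<le> M * measure lborel (cbox x y)"
    by (rule has_integral_bound[OF M0])
  then show ?thesis using xy by simp
qed

lemma taylor_remainder_bound:
  fixes v v' w :: "real \<Rightarrow> complex"
  assumes dv: "\<forall>t. (v has_vector_derivative v' t) (at t)"
    and cont: "continuous_on UNIV v'" and lf: "locally_finite_set S"
    and der: "\<forall>t. t \<notin> S \<longrightarrow> (v' has_vector_derivative w t) (at t)"
    and xy: "x \<le> y" and bnd: "\<forall>t\<in>{x..y}. cmod (w t) \<le> M"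
    and s: "s \<in> {x, y}"
  shows "cmod (v y - v x - of_real (y - x) * v' s) \<le> M * (y - x) * (y - x)"
proof -
  have M0: "0 \<le> M" using bnd xy by (meson atLeastAtMost_iff norm_ge_zero order.trans order_refl)
  have cv: "continuous_on UNIV v"
    using dv by (intro continuous_on_vector_derivative) (auto intro: has_vector_derivative_at_within)
  have "(v' has_integral (v y - v x)) {x..y}"
  proof (rule fundamental_theorem_of_calculus_interior_strong[of "{}" x y])
    show "continuous_on {x..y} v" using continuous_on_subset[OF cv] by blast
  qed (use xy dv in auto)
  moreover have "((\<lambda>t. v' s) has_integral (of_real (y - x) * v' s)) {x..y}"
    using has_integral_const_real[of "v' s" x y] xy by (simp add: scaleR_conv_of_real)
  ultimately have "((\<lambda>t. v' t - v' s) has_integral (v y - v x - of_real (y - x) * v' s)) (cbox x y)"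
    unfolding cbox_interval by (rule has_integral_diff)
  moreover have "cmod (v' t - v' s) \<le> M * (y - x)" if t: "t \<in> cbox x y" for t
  proof -
    have t': "x \<le> t" "t \<le> y" using t by (auto simp: cbox_interval)
    have "cmod (v' t - v' s) \<le> M * \<bar>t - s\<bar>"
    proof (cases "s = x")
      case True
      then show ?thesis
        using t' bnd lipschitz_from_derivative_bound[OF cont lf der, of x t M] by simp
    next
      case False
      then have "s = y" using s by simp
      then show ?thesis
        using t' bnd lipschitz_from_derivative_bound[OF cont lf der, of t y M]
        by (simp add: norm_minus_commute)
    qed
    also have "\<dots> \<le> M * (y - x)" using s t' M0 by (intro mult_left_mono) auto
    finally show ?thesis .
  qed
  moreover have "0 \<le> M * (y - x)" using M0 xy by simp
  ultimately have "cmod (v y - v x - of_real (y - x) * v' s) \<le> M * (y - x) * measure lborel (cbox x y)"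
    using has_integral_bound by blast
  then show ?thesis using xy by simp
qed

lemma derivative_bound_by_values:
  fixes v v' w :: "real \<Rightarrow> complex"
  assumes dv: "\<forall>t. (v has_vector_derivative v' t) (at t)"
    and cont: "continuous_on UNIV v'" and lf: "locally_finite_set S"
    and der: "\<forall>t. t \<notin> S \<longrightarrow> (v' has_vector_derivative w t) (at t)"
    and xy: "x \<le> y" and bnd: "\<forall>t\<in>{x..y}. cmod (w t) \<le> M"
    and s: "s \<in> {x, y}"
  shows "(y - x) * cmod (v' s) \<le> cmod (v x) + cmod (v y) + M * (y - x) * (y - x)"
proof -
  let ?R = "v y - v x - of_real (y - x) * v' s"
  have "(y - x) * cmod (v' s) = cmod (of_real (y - x) * v' s)"
    using xy by (simp add: norm_mult del: of_real_diff)
  also have "\<dots> = cmod ((v y - v x) - ?R)" by simp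
  also have "\<dots> \<le> cmod (v y - v x) + cmod ?R" by (rule norm_triangle_ineq4)
  also have "\<dots> \<le> cmod (v x) + cmod (v y) + M * (y - x) * (y - x)"
    using taylor_remainder_bound[OF assms] norm_triangle_ineq4[of "v y" "v x"] by linarith
  finally show ?thesis .
qed

text \<open>Choosing the step d small compared with the second-derivative bound M.\<close>
lemma small_from_scaled_bound:
  fixes e d M a c1 c2 :: real
  assumes e: "e > 0" and dd: "d = e / (2 * (\<bar>M\<bar> + 1))"
    and h: "d * a \<le> c1 + c2 + M * d * d" and c1: "c1 < e * d / 4" and c2: "c2 < e * d / 4"
  shows "a < e"
proof -
  have d: "d > 0" using e dd by (simp add: add_pos_nonneg)
  have "M * d \<le> \<bar>M\<bar> * d" using d by (simp add: mult_right_mono)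
  also have "\<bar>M\<bar> * d = e / 2 * (\<bar>M\<bar> / (\<bar>M\<bar> + 1))" unfolding dd by (simp add: field_simps)
  also have "\<dots> < e / 2" using e by (simp add: field_simps)
  finally have Md: "M * d < e / 2" .
  have "d * a < d * (e/2 + M * d)" using h c1 c2 by (simp add: algebra_simps)
  then have "a < e/2 + M * d" using d by (simp add: mult_less_cancel_left_pos)
  then show ?thesis using Md by linarith
qed

lemma derivative_vanishes_at_bot:
  fixes v v' w :: "real \<Rightarrow> complex"
  assumes dv: "\<forall>t. (v has_vector_derivative v' t) (at t)"
    and cont: "continuous_on UNIV v'" and lf: "locally_finite_set S"
    and der: "\<forall>t. t \<notin> S \<longrightarrow> (v' has_vector_derivative w t) (at t)"
    and bnd: "eventually (\<lambda>t. cmod (w t) \<le> M) at_bot" and lim: "(v \<longlongrightarrow> 0) at_bot"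
  shows "(v' \<longlongrightarrow> 0) at_bot"
proof (rule tendstoI)
  fix e :: real assume e: "e > 0"
  define d where "d = e / (2 * (\<bar>M\<bar> + 1))"
  have d: "d > 0" using e by (simp add: d_def add_pos_nonneg)
  obtain b where b: "\<forall>t\<le>b. cmod (w t) \<le> M" using bnd by (auto simp: eventually_at_bot_linorder)
  have "e*d/4 > 0" using e d by simp
  from tendstoD[OF lim this] have "eventually (\<lambda>t. dist (v t) 0 < e*d/4) at_bot" .
  then obtain b2 where b2: "\<forall>t\<le>b2. cmod (v t) < e*d/4" by (auto simp: eventually_at_bot_linorder)
  show "eventually (\<lambda>x. dist (v' x) 0 < e) at_bot"
    unfolding eventually_at_bot_linorder
  proof (intro exI[of _ "min b b2 - d"] allI impI)
    fix x assume x: "x \<le> min b b2 - d"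
    have "(x + d - x) * cmod (v' x) \<le> cmod (v x) + cmod (v (x + d)) + M * (x + d - x) * (x + d - x)"
      using b x d by (intro derivative_bound_by_values[OF dv cont lf der]) auto
    moreover have "cmod (v (x + d)) < e*d/4" "cmod (v x) < e*d/4" using b2 x d by auto
    ultimately show "dist (v' x) 0 < e" using small_from_scaled_bound[OF e d_def] by simp
  qed
qed

lemma derivative_vanishes_at_top:
  fixes v v' w :: "real \<Rightarrow> complex"
  assumes dv: "\<forall>t. (v has_vector_derivative v' t) (at t)"
    and cont: "continuous_on UNIV v'" and lf: "locally_finite_set S"
    and der: "\<forall>t. t \<notin> S \<longrightarrow> (v' has_vector_derivative w t) (at t)"
    and bnd: "eventually (\<lambda>t. cmod (w t) \<le> M) at_top" and lim: "(v \<longlongrightarrow> 0) at_top"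
  shows "(v' \<longlongrightarrow> 0) at_top"
proof (rule tendstoI)
  fix e :: real assume e: "e > 0"
  define d where "d = e / (2 * (\<bar>M\<bar> + 1))"
  have d: "d > 0" using e by (simp add: d_def add_pos_nonneg)
  obtain b where b: "\<forall>t\<ge>b. cmod (w t) \<le> M" using bnd by (auto simp: eventually_at_top_linorder)
  have "e*d/4 > 0" using e d by simp
  from tendstoD[OF lim this] have "eventually (\<lambda>t. dist (v t) 0 < e*d/4) at_top" .
  then obtain b2 where b2: "\<forall>t\<ge>b2. cmod (v t) < e*d/4" by (auto simp: eventually_at_top_linorder)
  show "eventually (\<lambda>x. dist (v' x) 0 < e) at_top"
    unfolding eventually_at_top_linorder
  proof (intro exI[of _ "max b b2 + d"] allI impI)
    fix x assume x: "x \<ge> max b b2 + d"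
    have "(x - (x - d)) * cmod (v' x) \<le> cmod (v (x - d)) + cmod (v x) + M * (x - (x - d)) * (x - (x - d))"
      using b x d by (intro derivative_bound_by_values[OF dv cont lf der]) auto
    moreover have "cmod (v (x - d)) < e*d/4" "cmod (v x) < e*d/4" using b2 x d by auto
    ultimately show "dist (v' x) 0 < e" using small_from_scaled_bound[OF e d_def] by simp
  qed
qed

lemma tendsto_zero_times_bounded:
  fixes a b :: "'a \<Rightarrow> complex"
  assumes "(a \<longlongrightarrow> 0) F" "\<And>x. cmod (b x) \<le> B"
  shows "((\<lambda>x. a x * b x) \<longlongrightarrow> 0) F"
proof (rule Lim_null_comparison)
  show "\<forall>\<^sub>F x in F. norm (a x * b x) \<le> cmod (a x) * B"
    using assms(2) by (intro always_eventually allI) (simp add: norm_mult mult_left_mono)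
  show "((\<lambda>x. cmod (a x) * B) \<longlongrightarrow> 0) F"
    using tendsto_mult_left_zero[OF tendsto_norm_zero[OF assms(1)]] by simp
qed

lemma norm_sq_limit:
  fixes Z Z0 :: "'a \<Rightarrow> complex"
  assumes l: "((\<lambda>x. Z x - Z0 x) \<longlongrightarrow> 0) F" and n: "\<And>x. cmod (Z0 x) = C"
  shows "((\<lambda>x. (cmod (Z x))\<^sup>2) \<longlongrightarrow> C\<^sup>2) F"
proof -
  have "((\<lambda>x. cmod (Z x) - C) \<longlongrightarrow> 0) F"
  proof (rule Lim_null_comparison)
    show "\<forall>\<^sub>F x in F. norm (cmod (Z x) - C) \<le> cmod (Z x - Z0 x)"
      by (intro always_eventually allI) (metis n norm_triangle_ineq3 real_norm_def)
    show "((\<lambda>x. cmod (Z x - Z0 x)) \<longlongrightarrow> 0) F" using tendsto_norm_zero[OF l] .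
  qed
  then have "((\<lambda>x. (cmod (Z x) - C) + C) \<longlongrightarrow> 0 + C) F" by (intro tendsto_intros)
  then show ?thesis by (simp add: tendsto_power)
qed

lemma eventually_residual_bounded:
  fixes k2 :: "real \<Rightarrow> real" and u \<psi> :: "real \<Rightarrow> complex"
  assumes k: "(k2 \<longlongrightarrow> K) F" and u: "((\<lambda>x. u x - \<psi> x) \<longlongrightarrow> 0) F"
    and b: "\<And>x. cmod (\<psi> x) \<le> B"
  shows "\<exists>M. eventually (\<lambda>x. cmod (- (of_real (k2 x) * u x) - - (of_real K * \<psi> x)) \<le> M) F"
proof -
  have "eventually (\<lambda>x. dist (k2 x) K < 1) F" using tendstoD[OF k] by simp
  moreover have "eventually (\<lambda>x. dist (u x - \<psi> x) 0 < 1) F" using tendstoD[OF u] by simp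
  ultimately have "eventually (\<lambda>x. cmod (- (of_real (k2 x) * u x) - - (of_real K * \<psi> x))
      \<le> (\<bar>K\<bar> + 1) * (1 + B) + \<bar>K\<bar> * B) F"
  proof eventually_elim
    case (elim x)
    have "\<bar>k2 x\<bar> \<le> \<bar>K\<bar> + 1" using elim(1) by (simp add: dist_real_def)
    moreover have "cmod (u x) \<le> 1 + B"
      using elim(2) b[of x] norm_triangle_ineq[of "u x - \<psi> x" "\<psi> x"] by simp
    moreover have "cmod (- (of_real (k2 x) * u x) - - (of_real K * \<psi> x))
        \<le> \<bar>k2 x\<bar> * cmod (u x) + \<bar>K\<bar> * cmod (\<psi> x)"
      using norm_triangle_ineq4[of "of_real K * \<psi> x" "of_real (k2 x) * u x"] by (simp add: norm_mult)
    moreover have "\<bar>k2 x\<bar> * cmod (u x) + \<bar>K\<bar> * cmod (\<psi> x) \<le> (\<bar>K\<bar> + 1) * (1 + B) + \<bar>K\<bar> * B"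
      using calculation(1,2) b[of x] by (intro add_mono mult_mono mult_left_mono) auto
    ultimately show ?case by linarith
  qed
  then show ?thesis by blast
qed

section \<open>Plane waves and their amplitudes\<close>

definition plane_wave :: "real \<Rightarrow> complex \<Rightarrow> complex \<Rightarrow> real \<Rightarrow> complex" where
  "plane_wave k a b x = a * cis (k * x) + b * cis (- k * x)"

definition plane_wave' :: "real \<Rightarrow> complex \<Rightarrow> complex \<Rightarrow> real \<Rightarrow> complex" where
  "plane_wave' k a b x = \<i> * of_real k * (a * cis (k * x) - b * cis (- k * x))"

lemma cis_linear_has_derivative:
  "((\<lambda>x. a * cis (k * x)) has_vector_derivative (\<i> * of_real k * a * cis (k * x))) (at x)"
  unfolding has_vector_derivative_def
  by (auto intro!: derivative_eq_intros simp: scaleR_conv_of_real algebra_simps)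

lemma plane_wave_has_derivative:
  "(plane_wave k a b has_vector_derivative plane_wave' k a b x) (at x)"
  unfolding plane_wave_def[abs_def] plane_wave'_def
  by (rule has_vector_derivative_eq_rhs[OF has_vector_derivative_add[OF
        cis_linear_has_derivative[of a k] cis_linear_has_derivative[of b "- k"]]])
     (simp add: algebra_simps)

lemma plane_wave'_has_derivative:
  "(plane_wave' k a b has_vector_derivative - (of_real (k\<^sup>2) * plane_wave k a b x)) (at x)"
  unfolding plane_wave_def plane_wave'_def[abs_def]
  by (rule has_vector_derivative_eq_rhs[OF has_vector_derivative_mult_right[OF
        has_vector_derivative_diff[OF cis_linear_has_derivative[of a k] cis_linear_has_derivative[of b "- k"]]]])
     (simp add: algebra_simps power2_eq_square)

lemma plane_wave_bounded:
  "cmod (plane_wave k a b x) \<le> cmod a + cmod b"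
  "cmod (plane_wave' k a b x) \<le> \<bar>k\<bar> * (cmod a + cmod b)"
proof -
  show "cmod (plane_wave k a b x) \<le> cmod a + cmod b"
    unfolding plane_wave_def using norm_triangle_ineq[of "a * cis (k * x)" "b * cis (- k * x)"]
    by (simp add: norm_mult)
  have "cmod (a * cis (k * x) - b * cis (- k * x)) \<le> cmod a + cmod b"
    using norm_triangle_ineq4[of "a * cis (k * x)" "b * cis (- k * x)"] by (simp add: norm_mult)
  then show "cmod (plane_wave' k a b x) \<le> \<bar>k\<bar> * (cmod a + cmod b)"
    unfolding plane_wave'_def by (simp add: norm_mult mult_left_mono)
qed

text \<open>The amplitude combination s z + \<sigma> i z'/s; for \<sigma> = -1 (resp. 1) and s = sqrt k
  it extracts the right-moving (resp. left-moving) part of a plane wave of wave number k.\<close>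
definition amp :: "real \<Rightarrow> real \<Rightarrow> complex \<Rightarrow> complex \<Rightarrow> complex" where
  "amp \<sigma> s z z' = of_real s * z + of_real \<sigma> * \<i> * z' / of_real s"

lemma amp_norm_sq:
  assumes s: "s > 0" and \<sigma>: "\<sigma>\<^sup>2 = 1"
  shows "(cmod (amp \<sigma> s z z'))\<^sup>2 = s\<^sup>2 * (cmod z)\<^sup>2 + (cmod z')\<^sup>2 / s\<^sup>2 - 2 * \<sigma> * Im (cnj z * z')"
proof -
  have "amp \<sigma> s z z' = Complex (s * Re z - \<sigma> * Im z' / s) (s * Im z + \<sigma> * Re z' / s)"
    by (simp add: amp_def complex_eq_iff)
  moreover have "\<sigma> = 1 \<or> \<sigma> = -1" using \<sigma> by (simp add: power2_eq_1_iff)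
  ultimately show ?thesis using s unfolding cmod_power2
    by (auto simp: power2_eq_square field_simps)
qed

lemma amp_plane_wave:
  assumes k: "k > 0"
  shows "cmod (amp (-1) (sqrt k) (plane_wave k a b x) (plane_wave' k a b x)) = 2 * sqrt k * cmod a"
    and "cmod (amp 1 (sqrt k) (plane_wave k a b x) (plane_wave' k a b x)) = 2 * sqrt k * cmod b"
proof -
  define s where "s = sqrt k"
  have s0: "s > 0" using k by (simp add: s_def)
  have ks: "(of_real k :: complex) = of_real s * of_real s" using k by (simp add: s_def flip: of_real_mult)
  have "amp (-1) s (plane_wave k a b x) (plane_wave' k a b x) = 2 * of_real s * a * cis (k * x)"
    using s0 unfolding amp_def plane_wave_def plane_wave'_def ks by (simp add: field_simps)
  then show "cmod (amp (-1) (sqrt k) (plane_wave k a b x) (plane_wave' k a b x)) = 2 * sqrt k * cmod a"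
    using s0 by (simp add: norm_mult s_def)
  have "amp 1 s (plane_wave k a b x) (plane_wave' k a b x) = 2 * of_real s * b * cis (- k * x)"
    using s0 unfolding amp_def plane_wave_def plane_wave'_def ks by (simp add: field_simps)
  then show "cmod (amp 1 (sqrt k) (plane_wave k a b x) (plane_wave' k a b x)) = 2 * sqrt k * cmod b"
    using s0 by (simp add: norm_mult s_def)
qed

lemma amp_limit:
  fixes h :: "'a \<Rightarrow> real" and z z' \<psi> \<psi>' :: "'a \<Rightarrow> complex"
  assumes hl: "(h \<longlongrightarrow> k) F" and k: "k > 0"
    and l1: "((\<lambda>x. z x - \<psi> x) \<longlongrightarrow> 0) F" and l2: "((\<lambda>x. z' x - \<psi>' x) \<longlongrightarrow> 0) F"
    and b1: "\<And>x. cmod (\<psi> x) \<le> B1" and b2: "\<And>x. cmod (\<psi>' x) \<le> B2"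
  shows "((\<lambda>x. amp \<sigma> (sqrt (h x)) (z x) (z' x) - amp \<sigma> (sqrt k) (\<psi> x) (\<psi>' x)) \<longlongrightarrow> 0) F"
proof -
  have s1: "((\<lambda>x. of_real (sqrt (h x))) \<longlongrightarrow> (of_real (sqrt k) :: complex)) F"
    by (intro tendsto_intros hl)
  have s2: "((\<lambda>x. of_real (1 / sqrt (h x))) \<longlongrightarrow> (of_real (1 / sqrt k) :: complex)) F"
    using k by (intro tendsto_intros hl) auto
  have t1: "((\<lambda>x. of_real (sqrt (h x)) * (z x - \<psi> x)) \<longlongrightarrow> 0) F"
    using tendsto_mult[OF s1 l1] by simp
  have t2: "((\<lambda>x. of_real (sqrt (h x) - sqrt k) * \<psi> x) \<longlongrightarrow> 0) F"
    using tendsto_diff[OF s1 tendsto_const[of "of_real (sqrt k)"]]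
    by (intro tendsto_zero_times_bounded[OF _ b1]) simp
  have t3: "((\<lambda>x. (z' x - \<psi>' x) * of_real (1 / sqrt (h x))) \<longlongrightarrow> 0) F"
    using tendsto_mult[OF l2 s2] by simp
  have t4: "((\<lambda>x. of_real (1 / sqrt (h x) - 1 / sqrt k) * \<psi>' x) \<longlongrightarrow> 0) F"
    using tendsto_diff[OF s2 tendsto_const[of "of_real (1 / sqrt k)"]]
    by (intro tendsto_zero_times_bounded[OF _ b2]) simp
  have "amp \<sigma> (sqrt (h x)) (z x) (z' x) - amp \<sigma> (sqrt k) (\<psi> x) (\<psi>' x)
     = of_real (sqrt (h x)) * (z x - \<psi> x) + of_real (sqrt (h x) - sqrt k) * \<psi> x
       + of_real \<sigma> * \<i> * ((z' x - \<psi>' x) * of_real (1 / sqrt (h x))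
         + of_real (1 / sqrt (h x) - 1 / sqrt k) * \<psi>' x)" for x
    by (simp add: amp_def algebra_simps divide_inverse of_real_inverse)
  moreover have "((\<lambda>x. of_real (sqrt (h x)) * (z x - \<psi> x) + of_real (sqrt (h x) - sqrt k) * \<psi> x
       + of_real \<sigma> * \<i> * ((z' x - \<psi>' x) * of_real (1 / sqrt (h x))
         + of_real (1 / sqrt (h x) - 1 / sqrt k) * \<psi>' x)) \<longlongrightarrow> 0) F"
    using tendsto_add[OF tendsto_add[OF t1 t2] tendsto_mult_left[OF tendsto_add[OF t3 t4]]] by simp
  ultimately show ?thesis by simp
qed

section \<open>The energy and its potential\<close>

definition energy :: "(real \<Rightarrow> real) \<Rightarrow> (real \<Rightarrow> complex) \<Rightarrow> (real \<Rightarrow> complex) \<Rightarrow> real \<Rightarrow> real" where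
  "energy h u u' t = h t * (cmod (u t))\<^sup>2 + (cmod (u' t))\<^sup>2 / h t"

lemma energy_amp:
  assumes "h t > 0" and "\<sigma>\<^sup>2 = 1"
  shows "(cmod (amp \<sigma> (sqrt (h t)) (u t) (u' t)))\<^sup>2 = energy h u u' t - 2 * \<sigma> * Im (cnj (u t) * u' t)"
  using assms amp_norm_sq[of "sqrt (h t)" \<sigma> "u t" "u' t"] by (simp add: energy_def)

lemma energy_ge_flux:
  assumes "h t > 0"
  shows "energy h u u' t \<ge> 2 * \<bar>Im (cnj (u t) * u' t)\<bar>"
proof -
  have "0 \<le> energy h u u' t - 2 * \<sigma> * Im (cnj (u t) * u' t)" if "\<sigma>\<^sup>2 = 1" for \<sigma>
    using energy_amp[of h t \<sigma> u u', OF assms that] zero_le_power2 by metis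
  from this[of 1] this[of "-1"] show ?thesis by (auto simp: abs_if)
qed

text \<open>The potential \<Lambda>_c(s) = ln (s + sqrt (s^2 - 4c^2)), an arcosh in disguise; its
  derivative along E is E' / sqrt (E^2 - 4c^2).\<close>
definition potential :: "real \<Rightarrow> real \<Rightarrow> real" where
  "potential c s = ln (s + sqrt (s\<^sup>2 - 4 * c\<^sup>2))"

lemma potential_arg_pos:
  assumes "2 * \<bar>c\<bar> \<le> s" "0 < s"
  shows "0 \<le> s\<^sup>2 - 4 * c\<^sup>2" and "0 < s + sqrt (s\<^sup>2 - 4 * c\<^sup>2)"
proof -
  have "(2 * \<bar>c\<bar>)\<^sup>2 \<le> s\<^sup>2" using assms by (intro power_mono) auto
  then show "0 \<le> s\<^sup>2 - 4 * c\<^sup>2" by (simp add: power_mult_distrib)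
  then show "0 < s + sqrt (s\<^sup>2 - 4 * c\<^sup>2)" using assms(2) real_sqrt_ge_zero by (metis add_pos_nonneg)
qed

lemma potential_has_derivative:
  fixes F :: "real \<Rightarrow> real"
  assumes dF: "(F has_real_derivative Fd) (at x)" and Fx: "F x > 2 * \<bar>c\<bar>"
  shows "((\<lambda>t. potential c (F t)) has_real_derivative Fd / sqrt ((F x)\<^sup>2 - 4 * c\<^sup>2)) (at x)"
proof -
  define s where "s = sqrt ((F x)\<^sup>2 - 4 * c\<^sup>2)"
  have "(2 * \<bar>c\<bar>)\<^sup>2 < (F x)\<^sup>2" using Fx by (intro power_strict_mono) auto
  then have R: "(F x)\<^sup>2 - 4 * c\<^sup>2 > 0" by (simp add: power_mult_distrib)
  then have s0: "s > 0" by (simp add: s_def)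
  have pos: "F x + s > 0" using potential_arg_pos(2)[of c "F x"] Fx by (simp add: s_def)
  have "((\<lambda>t. potential c (F t)) has_real_derivative (Fd + inverse s * (Fd * F x)) / (F x + s)) (at x)"
    unfolding potential_def s_def using R pos[unfolded s_def]
    by (auto intro!: derivative_eq_intros dF)
  moreover have "(Fd + inverse s * (Fd * F x)) / (F x + s) = Fd / s"
  proof -
    have "Fd + inverse s * (Fd * F x) = (Fd / s) * (F x + s)" using s0 by (simp add: field_simps)
    then show ?thesis using less_imp_neq[OF pos, symmetric] by simp
  qed
  ultimately show ?thesis by (simp add: s_def)
qed

text \<open>The algebraic heart of the energy estimate: with X = h P - Q/h and Y = 2 Re (cnj u u'),
  the derivative of E is (h'/h) X + ((h^2 - k^2)/h) Y while X^2 + Y^2 = E^2 - 4 J^2.\<close>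
lemma energy_derivative_algebra:
  fixes h hd k p q p1 q1 :: real
  assumes h: "h > 0"
  shows "\<bar>hd * (p\<^sup>2 + q\<^sup>2) + h * (2 * p * p1 + 2 * q * q1) - 2 * k * (p * p1 + q * q1) / h - hd * (p1\<^sup>2 + q1\<^sup>2) / h\<^sup>2\<bar>
    \<le> (\<bar>hd\<bar> + \<bar>h\<^sup>2 - k\<bar>) / h * sqrt ((h * (p\<^sup>2 + q\<^sup>2) + (p1\<^sup>2 + q1\<^sup>2) / h)\<^sup>2 - 4 * (p * q1 - q * p1)\<^sup>2)"
proof -
  define X where "X = h * (p\<^sup>2 + q\<^sup>2) - (p1\<^sup>2 + q1\<^sup>2) / h"
  define Y where "Y = 2 * (p * p1 + q * q1)"
  have id1: "hd * (p\<^sup>2 + q\<^sup>2) + h * (2 * p * p1 + 2 * q * q1) - 2 * k * (p * p1 + q * q1) / h - hd * (p1\<^sup>2 + q1\<^sup>2) / h\<^sup>2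
     = (hd / h) * X + ((h\<^sup>2 - k) / h) * Y"
    using h by (simp add: X_def Y_def field_simps power2_eq_square)
  have id2: "(h * (p\<^sup>2 + q\<^sup>2) + (p1\<^sup>2 + q1\<^sup>2) / h)\<^sup>2 - 4 * (p * q1 - q * p1)\<^sup>2 = X\<^sup>2 + Y\<^sup>2"
    using h by (simp add: X_def Y_def field_simps power2_eq_square)
  have bX: "\<bar>X\<bar> \<le> sqrt (X\<^sup>2 + Y\<^sup>2)" and bY: "\<bar>Y\<bar> \<le> sqrt (X\<^sup>2 + Y\<^sup>2)"
    by (simp_all add: real_le_rsqrt)
  have "\<bar>(hd / h) * X + ((h\<^sup>2 - k) / h) * Y\<bar> \<le> \<bar>hd / h\<bar> * \<bar>X\<bar> + \<bar>(h\<^sup>2 - k) / h\<bar> * \<bar>Y\<bar>"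
    using abs_triangle_ineq[of "(hd / h) * X" "((h\<^sup>2 - k) / h) * Y"] by (simp only: abs_mult)
  also have "\<dots> \<le> \<bar>hd / h\<bar> * sqrt (X\<^sup>2 + Y\<^sup>2) + \<bar>(h\<^sup>2 - k) / h\<bar> * sqrt (X\<^sup>2 + Y\<^sup>2)"
    by (intro add_mono mult_left_mono bX bY) auto
  also have "\<dots> = (\<bar>hd\<bar> + \<bar>h\<^sup>2 - k\<bar>) / h * sqrt (X\<^sup>2 + Y\<^sup>2)"
    using h by (simp add: field_simps)
  finally show ?thesis unfolding id1 id2 .
qed

section \<open>Solutions of u'' + k^2 u = 0\<close>

locale ode_solution =
  fixes S :: "real set" and k2 :: "real \<Rightarrow> real" and u u' :: "real \<Rightarrow> complex"
  assumes lf: "locally_finite_set S"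
    and du: "\<forall>x. (u has_vector_derivative u' x) (at x)"
    and cu': "continuous_on UNIV u'"
    and d2: "\<forall>x. x \<notin> S \<longrightarrow> (u' has_vector_derivative (- (complex_of_real (k2 x) * u x))) (at x)"

lemma is_solution_ode_solution: "is_solution k2 u \<Longrightarrow> \<exists>S u'. ode_solution S k2 u u'"
  by (auto simp: is_solution_def ode_solution_def)

context ode_solution
begin

lemma continuous_u: "continuous_on UNIV u"
  using du by (intro continuous_on_vector_derivative) (auto intro: has_vector_derivative_at_within)

text \<open>Flux conservation: the Wronskian Im (cnj u * u') is constant, since its derivative
  Im (|u'|^2 - k^2 |u|^2) vanishes off S.\<close>
lemma flux_constant: "\<exists>c. \<forall>x. Im (cnj (u x) * u' x) = c"
proof -
  define J where "J x = Im (cnj (u x) * u' x)" for x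
  have cJ: "continuous_on UNIV J" unfolding J_def by (intro continuous_intros continuous_u cu')
  have dJ: "(J has_derivative (\<lambda>h. 0)) (at x)" if x: "x \<notin> S" for x
  proof -
    have "((\<lambda>x. cnj (u x)) has_vector_derivative cnj (u' x)) (at x)"
      by (rule bounded_linear.has_vector_derivative[OF bounded_linear_cnj du[rule_format]])
    from has_vector_derivative_mult[OF this d2[rule_format, OF x]]
    have "(J has_vector_derivative Im (cnj (u x) * (- (of_real (k2 x) * u x)) + cnj (u' x) * u' x)) (at x)"
      unfolding J_def by (rule bounded_linear.has_vector_derivative[OF bounded_linear_Im])
    moreover have "Im (cnj (u x) * (- (of_real (k2 x) * u x)) + cnj (u' x) * u' x) = 0"
      by (simp add: algebra_simps)
    ultimately show ?thesis unfolding has_vector_derivative_def by simp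
  qed
  have "J z = J (min 0 x)" if "z \<in> {min 0 x .. max 0 x}" for x z
  proof (rule has_derivative_zero_unique_strong_interval[OF locally_finite_set_finite[OF lf] _ refl _ that])
    show "continuous_on {min 0 x..max 0 x} J" using continuous_on_subset[OF cJ] by blast
  qed (use dJ has_derivative_at_withinI in blast)
  then have "J x = J 0" for x by (metis atLeastAtMost_iff max.cobounded1 max.cobounded2 min.cobounded1 min.cobounded2)
  then show ?thesis unfolding J_def by blast
qed

lemma wave_derivative_limit:
  assumes F: "F = at_top \<or> F = at_bot"
    and k2l: "(k2 \<longlongrightarrow> k\<^sup>2) F" and ul: "((\<lambda>x. u x - plane_wave k a b x) \<longlongrightarrow> 0) F"
  shows "((\<lambda>x. u' x - plane_wave' k a b x) \<longlongrightarrow> 0) F"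
proof -
  let ?w = "\<lambda>x. - (of_real (k2 x) * u x) - - (of_real (k\<^sup>2) * plane_wave k a b x)"
  have dv: "\<forall>t. ((\<lambda>x. u x - plane_wave k a b x) has_vector_derivative u' t - plane_wave' k a b t) (at t)"
    using du plane_wave_has_derivative by (auto intro: has_vector_derivative_diff)
  have "continuous_on UNIV (plane_wave' k a b)"
    using plane_wave'_has_derivative
    by (intro continuous_on_vector_derivative) (auto intro: has_vector_derivative_at_within)
  then have cv: "continuous_on UNIV (\<lambda>x. u' x - plane_wave' k a b x)" by (intro continuous_intros cu')
  have dw: "\<forall>t. t \<notin> S \<longrightarrow> ((\<lambda>x. u' x - plane_wave' k a b x) has_vector_derivative ?w t) (at t)"
    by (intro allI impI has_vector_derivative_diff[OF d2[rule_format] plane_wave'_has_derivative])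
  obtain M where "eventually (\<lambda>t. cmod (?w t) \<le> M) F"
    using eventually_residual_bounded[OF k2l ul plane_wave_bounded(1)] by blast
  then show ?thesis
    using F derivative_vanishes_at_top[OF dv cv lf dw] derivative_vanishes_at_bot[OF dv cv lf dw] ul
    by auto
qed

lemma energy_limit:
  assumes F: "F = at_top \<or> F = at_bot" and k: "k > 0" and hp: "\<forall>x. h x > 0"
    and hl: "(h \<longlongrightarrow> k) F" and k2l: "(k2 \<longlongrightarrow> k\<^sup>2) F"
    and ul: "((\<lambda>x. u x - plane_wave k a b x) \<longlongrightarrow> 0) F"
    and flux: "\<forall>x. Im (cnj (u x) * u' x) = c"
  shows "(energy h u u' \<longlongrightarrow> 2 * k * ((cmod a)\<^sup>2 + (cmod b)\<^sup>2)) F"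
    and "c = k * ((cmod a)\<^sup>2 - (cmod b)\<^sup>2)"
proof -
  have u'l: "((\<lambda>x. u' x - plane_wave' k a b x) \<longlongrightarrow> 0) F"
    by (rule wave_derivative_limit[OF F k2l ul])
  have lim: "((\<lambda>x. energy h u u' x - 2 * \<sigma> * c) \<longlongrightarrow> (2 * sqrt k * cmod z)\<^sup>2) F"
    if \<sigma>: "\<sigma>\<^sup>2 = 1"
      and z: "\<And>x. cmod (amp \<sigma> (sqrt k) (plane_wave k a b x) (plane_wave' k a b x)) = 2 * sqrt k * cmod z"
    for \<sigma> z
  proof -
    have "((\<lambda>x. (cmod (amp \<sigma> (sqrt (h x)) (u x) (u' x)))\<^sup>2) \<longlongrightarrow> (2 * sqrt k * cmod z)\<^sup>2) F"
      by (rule norm_sq_limit[OF amp_limit[OF hl k ul u'l plane_wave_bounded] z])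
    moreover have "(cmod (amp \<sigma> (sqrt (h x)) (u x) (u' x)))\<^sup>2 = energy h u u' x - 2 * \<sigma> * c" for x
      using energy_amp[of h x \<sigma> u u'] hp \<sigma> flux by simp
    ultimately show ?thesis by simp
  qed
  have right: "((\<lambda>x. energy h u u' x + 2 * c) \<longlongrightarrow> 4 * k * (cmod a)\<^sup>2) F"
    using lim[of "-1" a] amp_plane_wave(1)[OF k] k by (simp add: power_mult_distrib)
  have left: "((\<lambda>x. energy h u u' x - 2 * c) \<longlongrightarrow> 4 * k * (cmod b)\<^sup>2) F"
    using lim[of 1 b] amp_plane_wave(2)[OF k] k by (simp add: power_mult_distrib)
  have "((\<lambda>x. ((energy h u u' x + 2 * c) + (energy h u u' x - 2 * c)) / 2)
      \<longlongrightarrow> (4 * k * (cmod a)\<^sup>2 + 4 * k * (cmod b)\<^sup>2) / 2) F"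
    by (intro tendsto_intros right left) simp
  then have "(energy h u u' \<longlongrightarrow> (4 * k * (cmod a)\<^sup>2 + 4 * k * (cmod b)\<^sup>2) / 2) F" by simp
  then show "(energy h u u' \<longlongrightarrow> 2 * k * ((cmod a)\<^sup>2 + (cmod b)\<^sup>2)) F"
    by (rule tendsto_eq_rhs) (simp add: algebra_simps)
  have "((\<lambda>x. (energy h u u' x + 2 * c) - (energy h u u' x - 2 * c))
      \<longlongrightarrow> 4 * k * (cmod a)\<^sup>2 - 4 * k * (cmod b)\<^sup>2) F"
    by (intro tendsto_intros right left)
  then have "((\<lambda>x. 4 * c) \<longlongrightarrow> 4 * k * (cmod a)\<^sup>2 - 4 * k * (cmod b)\<^sup>2) F" by simp
  moreover have "F \<noteq> bot" using F by (metis trivial_limit_at_bot_linorder trivial_limit_at_top_linorder)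
  ultimately show "c = k * ((cmod a)\<^sup>2 - (cmod b)\<^sup>2)"
    using tendsto_unique[OF _ tendsto_const] by (fastforce simp: algebra_simps)
qed

lemma energy_derivative_bound:
  assumes hp: "\<forall>x. h x > 0" and dh: "\<forall>x. (h has_real_derivative h' x) (at x)" and t: "t \<notin> S"
  shows "\<exists>D. (energy h u u' has_real_derivative D) (at t)
    \<and> \<bar>D\<bar> \<le> (\<bar>h' t\<bar> + \<bar>(h t)\<^sup>2 - k2 t\<bar>) / h t
              * sqrt ((energy h u u' t)\<^sup>2 - 4 * (Im (cnj (u t) * u' t))\<^sup>2)"
proof -
  define p where "p t = Re (u t)" for t
  define q where "q t = Im (u t)" for t
  define p1 where "p1 t = Re (u' t)" for t
  define q1 where "q1 t = Im (u' t)" for t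
  have Eeq: "energy h u u' = (\<lambda>t. h t * ((p t)\<^sup>2 + (q t)\<^sup>2) + ((p1 t)\<^sup>2 + (q1 t)\<^sup>2) / h t)"
    by (simp add: fun_eq_iff energy_def cmod_power2 p_def q_def p1_def q1_def)
  have Jeq: "Im (cnj (u t) * u' t) = p t * q1 t - q t * p1 t"
    by (simp add: p_def q_def p1_def q1_def)
  have dp: "(p has_real_derivative p1 t) (at t)" and dq: "(q has_real_derivative q1 t) (at t)"
    unfolding has_real_derivative_iff_has_vector_derivative p_def p1_def q_def q1_def
    by (rule bounded_linear.has_vector_derivative[OF bounded_linear_Re du[rule_format]]
             bounded_linear.has_vector_derivative[OF bounded_linear_Im du[rule_format]])+
  have dp1: "(p1 has_real_derivative - k2 t * p t) (at t)"
    using bounded_linear.has_vector_derivative[OF bounded_linear_Re d2[rule_format, OF t]]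
    unfolding has_real_derivative_iff_has_vector_derivative p_def p1_def by simp
  have dq1: "(q1 has_real_derivative - k2 t * q t) (at t)"
    using bounded_linear.has_vector_derivative[OF bounded_linear_Im d2[rule_format, OF t]]
    unfolding has_real_derivative_iff_has_vector_derivative q_def q1_def by simp
  have ht: "h t \<noteq> 0" using hp by (metis less_irrefl)
  have dP: "((\<lambda>t. (p t)\<^sup>2 + (q t)\<^sup>2) has_real_derivative 2 * p t * p1 t + 2 * q t * q1 t) (at t)"
    by (rule DERIV_cong[OF DERIV_add[OF DERIV_power[OF dp, of 2] DERIV_power[OF dq, of 2]]])
       (simp add: algebra_simps)
  have dQ: "((\<lambda>t. (p1 t)\<^sup>2 + (q1 t)\<^sup>2) has_real_derivative
      2 * p1 t * (- k2 t * p t) + 2 * q1 t * (- k2 t * q t)) (at t)"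
    by (rule DERIV_cong[OF DERIV_add[OF DERIV_power[OF dp1, of 2] DERIV_power[OF dq1, of 2]]])
       (simp add: algebra_simps)
  have "((\<lambda>t. h t * ((p t)\<^sup>2 + (q t)\<^sup>2) + ((p1 t)\<^sup>2 + (q1 t)\<^sup>2) / h t) has_real_derivative
      h' t * ((p t)\<^sup>2 + (q t)\<^sup>2) + h t * (2 * p t * p1 t + 2 * q t * q1 t)
      - 2 * k2 t * (p t * p1 t + q t * q1 t) / h t - h' t * ((p1 t)\<^sup>2 + (q1 t)\<^sup>2) / (h t)\<^sup>2) (at t)"
    by (rule DERIV_cong[OF DERIV_add[OF DERIV_mult[OF dh[rule_format] dP] DERIV_divide[OF dQ dh[rule_format] ht]]])
       (use ht in \<open>simp add: field_simps power2_eq_square\<close>)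
  moreover have "\<bar>h' t * ((p t)\<^sup>2 + (q t)\<^sup>2) + h t * (2 * p t * p1 t + 2 * q t * q1 t)
      - 2 * k2 t * (p t * p1 t + q t * q1 t) / h t - h' t * ((p1 t)\<^sup>2 + (q1 t)\<^sup>2) / (h t)\<^sup>2\<bar>
    \<le> (\<bar>h' t\<bar> + \<bar>(h t)\<^sup>2 - k2 t\<bar>) / h t
      * sqrt ((h t * ((p t)\<^sup>2 + (q t)\<^sup>2) + ((p1 t)\<^sup>2 + (q1 t)\<^sup>2) / h t)\<^sup>2 - 4 * (p t * q1 t - q t * p1 t)\<^sup>2)"
    using hp by (intro energy_derivative_algebra) auto
  ultimately show ?thesis unfolding Eeq Jeq by blast
qed

lemma potential_variation:
  assumes hp: "\<forall>x. h x > 0" and dh: "\<forall>x. (h has_real_derivative h' x) (at x)"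
    and flux: "\<forall>x. Im (cnj (u x) * u' x) = c" and sig: "\<forall>x. \<sigma> * h' x = \<bar>h' x\<bar>"
    and eps: "\<epsilon> > 0" and xy: "x \<le> y"
    and fint: "(\<lambda>t. \<bar>k2 t - (h t)\<^sup>2\<bar> / h t) integrable_on {x..y}"
  shows "potential c (energy h u u' x + \<epsilon>)
     \<le> potential c (energy h u u' y + \<epsilon>) + \<sigma> * (ln (h y) - ln (h x))
        + integral {x..y} (\<lambda>t. \<bar>k2 t - (h t)\<^sup>2\<bar> / h t)"
proof -
  define E where "E = energy h u u'"
  define f where "f t = \<bar>k2 t - (h t)\<^sup>2\<bar> / h t" for t
  define R where "R t = sqrt ((E t + \<epsilon>)\<^sup>2 - 4 * c\<^sup>2)" for t
  have Ege: "E t \<ge> 2 * \<bar>c\<bar>" for t using energy_ge_flux[of h t u u'] hp flux by (simp add: E_def)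
  have R_ge: "sqrt ((E t)\<^sup>2 - 4 * c\<^sup>2) \<le> R t" for t
    unfolding R_def using Ege[of t] eps by (intro real_sqrt_le_mono diff_right_mono power_mono) auto
  have R_pos: "R t > 0" for t
  proof -
    have "(2 * \<bar>c\<bar>)\<^sup>2 < (E t + \<epsilon>)\<^sup>2" using Ege[of t] eps by (intro power_strict_mono) auto
    then show ?thesis by (simp add: R_def power_mult_distrib)
  qed
  define C where "C t = (\<bar>h' t\<bar> + \<bar>(h t)\<^sup>2 - k2 t\<bar>) / h t" for t
  have "\<forall>t\<in>-S. \<exists>D. (E has_real_derivative D) (at t) \<and> \<bar>D\<bar> \<le> C t * sqrt ((E t)\<^sup>2 - 4 * c\<^sup>2)"
    using energy_derivative_bound[OF hp dh] flux unfolding E_def C_def by auto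
  from bchoice[OF this] obtain Ed
    where Ed: "\<forall>t\<in>-S. (E has_real_derivative Ed t) (at t) \<and> \<bar>Ed t\<bar> \<le> C t * sqrt ((E t)\<^sup>2 - 4 * c\<^sup>2)"
    by blast
  define G where "G t = potential c (E t + \<epsilon>) + \<sigma> * ln (h t)" for t
  define Gd where "Gd t = (if t \<in> S then - f t else Ed t / R t + \<sigma> * (h' t / h t))" for t
  have dG: "(G has_real_derivative Gd t) (at t)" if t: "t \<notin> S" for t
  proof -
    have "((\<lambda>t. E t + \<epsilon>) has_real_derivative Ed t) (at t)"
      using DERIV_add[OF conjunct1[OF Ed[rule_format]] DERIV_const[of \<epsilon>]] t by simp
    then have "((\<lambda>t. potential c (E t + \<epsilon>)) has_real_derivative Ed t / R t) (at t)"
      unfolding R_def by (rule potential_has_derivative) (use Ege[of t] eps in linarith)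
    moreover have "((\<lambda>t. \<sigma> * ln (h t)) has_real_derivative \<sigma> * (h' t / h t)) (at t)"
      by (rule DERIV_cong[OF DERIV_cmult[OF DERIV_chain2[OF DERIV_ln[OF hp[rule_format]] dh[rule_format]]]])
         (simp add: divide_inverse mult.commute)
    ultimately have "(G has_real_derivative Ed t / R t + \<sigma> * (h' t / h t)) (at t)"
      unfolding G_def[abs_def] by (rule DERIV_add)
    then show ?thesis using t by (simp add: Gd_def)
  qed
  have Gd_lb: "Gd t + f t \<ge> 0" for t
  proof (cases "t \<in> S")
    case False
    have "C t \<ge> 0" using hp by (simp add: C_def less_imp_le)
    have "\<bar>Ed t\<bar> \<le> C t * sqrt ((E t)\<^sup>2 - 4 * c\<^sup>2)" using Ed False by simp
    also have "\<dots> \<le> C t * R t" by (rule mult_left_mono[OF R_ge \<open>C t \<ge> 0\<close>])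
    finally have "\<bar>Ed t / R t\<bar> \<le> C t"
      using R_pos[of t] by (simp add: abs_divide pos_divide_le_eq)
    moreover have "C t = \<bar>h' t\<bar> / h t + f t"
      by (simp add: C_def f_def add_divide_distrib abs_minus_commute)
    moreover have "\<sigma> * (h' t / h t) = \<bar>h' t\<bar> / h t" using sig by (metis times_divide_eq_right)
    moreover have "Gd t = Ed t / R t + \<sigma> * (h' t / h t)" using False by (simp add: Gd_def)
    ultimately show ?thesis using abs_ge_minus_self[of "Ed t / R t"] by linarith
  qed (simp add: Gd_def)
  have ch: "continuous_on UNIV h"
    using dh by (intro continuous_at_imp_continuous_on) (auto intro: DERIV_isCont)
  have cE: "continuous_on UNIV E"
    unfolding E_def energy_def[abs_def] using hp
    by (intro continuous_intros ch continuous_u cu') (auto simp: less_imp_neq[symmetric])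
  have "E t + \<epsilon> + sqrt ((E t + \<epsilon>)\<^sup>2 - 4 * c\<^sup>2) > 0" for t
    using Ege[of t] eps abs_ge_zero[of c] by (intro potential_arg_pos(2)) linarith+
  then have cG: "continuous_on UNIV G"
    unfolding G_def[abs_def] potential_def using hp
    by (intro continuous_intros cE ch) (auto simp: less_imp_neq[symmetric])
  have "(Gd has_integral (G y - G x)) {x..y}"
  proof (rule fundamental_theorem_of_calculus_interior_strong[OF locally_finite_set_finite[OF lf] xy])
    show "continuous_on {x..y} G" using continuous_on_subset[OF cG] by blast
    fix t assume "t \<in> {x<..<y} - S \<inter> {x..y}"
    then have "t \<notin> S" by auto
    then show "(G has_vector_derivative Gd t) (at t)"
      using dG has_real_derivative_iff_has_vector_derivative by blast
  qed
  from has_integral_add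
[OF this integrable_integral[OF fint[folded f_def]]]
  have "0 \<le> G y - G x + integral {x..y} f"
    by (rule has_integral_nonneg) (use Gd_lb in auto)
  then show ?thesis unfolding G_def E_def f_def by (simp add: algebra_simps)
qed

end

section \<open>Comparing the two ends\<close>

lemma potential_comparison_at_infinity:
  fixes E :: "real \<Rightarrow> real"
  assumes c: "0 \<le> c" and A: "2 * c \<le> A"
    and Eb: "(E \<longlongrightarrow> A) at_bot" and Et: "(E \<longlongrightarrow> 2 * c) at_top"
    and var: "\<And>e x y. e > 0 \<Longrightarrow> x \<le> y \<Longrightarrow> potential c (E x + e) \<le> potential c (E y + e) + K"
  shows "A + sqrt (A\<^sup>2 - 4 * c\<^sup>2) \<le> 2 * c * exp K"
proof -
  have arg: "0 \<le> s\<^sup>2 - 4 * c\<^sup>2" "0 < s + sqrt (s\<^sup>2 - 4 * c\<^sup>2)" if "2 * c \<le> s" "0 < s" for s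
    using potential_arg_pos[of c s] that c by auto
  have exp_potential: "exp (potential c s) = s + sqrt (s\<^sup>2 - 4 * c\<^sup>2)" if "2 * c \<le> s" "0 < s" for s
    unfolding potential_def using arg(2)[OF that] by simp
  have ends: "potential c (A + e) \<le> potential c (2 * c + e) + K" if e: "e > 0" for e
  proof -
    have pos: "A + e \<noteq> - sqrt ((A + e)\<^sup>2 - 4 * c\<^sup>2)" "2 * c + e \<noteq> - sqrt ((2 * c + e)\<^sup>2 - 4 * c\<^sup>2)"
      using arg(2)[of "A + e"] arg(2)[of "2 * c + e"] A c e by auto
    have top: "((\<lambda>y. potential c (E y + e) + K) \<longlongrightarrow> potential c (2 * c + e) + K) at_top"
      unfolding potential_def using pos arg(2)[of "2 * c + e"] c e by (intro tendsto_intros Et) auto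
    have bot: "((\<lambda>x. potential c (E x + e)) \<longlongrightarrow> potential c (A + e)) at_bot"
      unfolding potential_def using pos arg(2)[of "A + e"] A c e by (intro tendsto_intros Eb) auto
    have "potential c (E x + e) \<le> potential c (2 * c + e) + K" for x
      by (rule tendsto_le[OF trivial_limit_at_top_linorder top tendsto_const])
         (use var[OF e] in \<open>auto simp: eventually_at_top_linorder\<close>)
    then show ?thesis
      by (intro tendsto_le[OF trivial_limit_at_bot_linorder tendsto_const bot] always_eventually) auto
  qed
  define R where "R e = (2 * c + e + sqrt ((2 * c + e)\<^sup>2 - 4 * c\<^sup>2)) * exp K" for e
  have "A + sqrt (A\<^sup>2 - 4 * c\<^sup>2) \<le> R e" if e: "e > 0" for e
  proof -
    have "A\<^sup>2 \<le> (A + e)\<^sup>2" using A c e by (intro power_mono) auto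
    then have "sqrt (A\<^sup>2 - 4 * c\<^sup>2) \<le> sqrt ((A + e)\<^sup>2 - 4 * c\<^sup>2)" by (intro real_sqrt_le_mono) simp
    then have "A + sqrt (A\<^sup>2 - 4 * c\<^sup>2) \<le> A + e + sqrt ((A + e)\<^sup>2 - 4 * c\<^sup>2)" using e by linarith
    also have "\<dots> = exp (potential c (A + e))" using A c e by (intro exp_potential[symmetric]) auto
    also have "\<dots> \<le> exp (potential c (2 * c + e) + K)" using ends[OF e] by simp
    also have "\<dots> = R e" using c e by (simp add: exp_add exp_potential R_def)
    finally show ?thesis .
  qed
  moreover have "(R \<longlongrightarrow> 2 * c * exp K) (at_right 0)"
  proof -
    have "(R \<longlongrightarrow> R 0) (at_right 0)"
      unfolding R_def by (intro tendsto_intros continuous_on_tendsto_compose) auto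
    then show ?thesis by (simp add: R_def power_mult_distrib)
  qed
  ultimately show ?thesis
    by (intro tendsto_lowerbound[of R]) (auto simp: eventually_at_right_field intro!: exI[of _ 1])
qed

lemma sech_bound_from_energy_ends:
  fixes km c th :: real
  assumes km: "km > 0" and th: "th \<ge> 0"
    and cle: "2 * c \<le> 4 * km - 2 * c"
    and W: "4 * km - 2 * c + sqrt ((4 * km - 2 * c)\<^sup>2 - 4 * c\<^sup>2) \<le> 2 * c * exp (2 * th)"
  shows "c / km \<ge> (sech th)\<^sup>2"
proof -
  define e where "e = exp th"
  have e1: "e \<ge> 1" using th by (simp add: e_def)
  have e2: "exp (2 * th) = e\<^sup>2" by (simp add: e_def power2_eq_square exp_add[symmetric])
  define s where "s = sqrt (km * (km - c))"
  have s0: "s \<ge> 0" and s2: "s\<^sup>2 = km * (km - c)" using cle km by (simp_all add: s_def)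
  have "sqrt ((4 * km - 2 * c)\<^sup>2 - 4 * c\<^sup>2) = sqrt (4\<^sup>2 * (km * (km - c)))"
    by (rule arg_cong[where f=sqrt]) (simp add: power2_eq_square algebra_simps)
  also have "\<dots> = 4 * s" by (simp add: s_def real_sqrt_mult)
  finally have W': "4 * s \<le> 2 * c * (e\<^sup>2 + 1) - 4 * km" using W e2 by (simp add: algebra_simps)
  have cpos: "c > 0"
  proof (rule ccontr)
    assume "\<not> c > 0"
    then have "2 * c * (e\<^sup>2 + 1) \<le> 0" by (simp add: mult_nonpos_nonneg)
    then show False using W' s0 km by linarith
  qed
  have "(4 * s)\<^sup>2 \<le> (2 * c * (e\<^sup>2 + 1) - 4 * km)\<^sup>2"
    using W' s0 by (intro power_mono) auto
  then have "(4 * c) * (4 * km * e\<^sup>2) \<le> (4 * c) * (c * (e\<^sup>2 + 1)\<^sup>2)"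
    using s2 by (simp add: power2_eq_square algebra_simps)
  then have key: "4 * km * e\<^sup>2 \<le> c * (e\<^sup>2 + 1)\<^sup>2"
    using cpos by (simp add: mult_le_cancel_left_pos)
  have ch: "cosh th = (e + 1/e) / 2" by (simp add: e_def cosh_def exp_minus field_simps)
  have "(sech th)\<^sup>2 = 4 * e\<^sup>2 / (e\<^sup>2 + 1)\<^sup>2"
    using e1 by (simp add: sech_def ch power2_eq_square field_simps)
  also have "\<dots> \<le> c / km"
    using key km add_nonneg_pos[of "e\<^sup>2" 1]
    by (simp add: divide_le_eq le_divide_eq mult.commute mult.left_commute)
  finally show ?thesis .
qed

theorem mainTheorem6:
  fixes k2 h :: "real \<Rightarrow> real" and km kp :: real
    and u :: "real \<Rightarrow> complex" and r \<tau> :: complex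
  assumes k2_pc: "piecewise_continuous k2"
    and km_pos: "km > 0" and kp_pos: "kp > 0"
    and k2_bot: "(k2 \<longlongrightarrow> km\<^sup>2) at_bot"
    and k2_top: "(k2 \<longlongrightarrow> kp\<^sup>2) at_top"
    and int_bot: "\<exists>a. (\<lambda>x. k2 x - km\<^sup>2) absolutely_integrable_on {..a}"
    and int_top: "\<exists>a. (\<lambda>x. k2 x - kp\<^sup>2) absolutely_integrable_on {a..}"
    and u_sol: "is_solution k2 u"
    and u_bot: "((\<lambda>x. u x - (cis (km * x) + r * cis (- km * x))) \<longlongrightarrow> 0) at_bot"
    and u_top: "((\<lambda>x. u x - \<tau> * cis (kp * x)) \<longlongrightarrow> 0) at_top"
    and h_pos: "\<forall>x. h x > 0"
    and h_C1: "\<exists>h'. (\<forall>x. (h has_real_derivative h' x) (at x)) \<and> continuous_on UNIV h'"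
    and h_mono: "mono h \<or> antimono h"
    and h_bot: "(h \<longlongrightarrow> km) at_bot"
    and h_top: "(h \<longlongrightarrow> kp) at_top"
    and I_fin: "(\<integral>\<^sup>+ x. ennreal (\<bar>k2 x - (h x)\<^sup>2\<bar> / h x) \<partial>lborel) < \<infinity>"
  shows "(kp / km) * (cmod \<tau>)\<^sup>2 \<ge>
     (sech ((1/2) * \<bar>ln (kp / km)\<bar>
        + (1/2) * enn2real (\<integral>\<^sup>+ x. ennreal (\<bar>k2 x - (h x)\<^sup>2\<bar> / h x) \<partial>lborel)))\<^sup>2"
proof -
  obtain S u' where "ode_solution S k2 u u'" using is_solution_ode_solution[OF u_sol] by blast
  then interpret ode_solution S k2 u u' .
  obtain h' where dh: "\<forall>x. (h has_real_derivative h' x) (at x)" using h_C1 by blast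
  obtain c where flux: "\<forall>x. Im (cnj (u x) * u' x) = c" using flux_constant by blast
  define I where "I = enn2real (\<integral>\<^sup>+ x. ennreal (\<bar>k2 x - (h x)\<^sup>2\<bar> / h x) \<partial>lborel)"
  define L where "L = \<bar>ln (kp / km)\<bar>"
  have u_bot': "((\<lambda>x. u x - plane_wave km 1 r x) \<longlongrightarrow> 0) at_bot" using u_bot by (simp add: plane_wave_def)
  have E_bot': "(energy h u u' \<longlongrightarrow> 2 * km * (1 + (cmod r)\<^sup>2)) at_bot"
    and c_bot: "c = km * (1 - (cmod r)\<^sup>2)"
    using energy_limit[OF _ km_pos h_pos h_bot k2_bot u_bot' flux] by auto
  have E_bot: "(energy h u u' \<longlongrightarrow> 4 * km - 2 * c) at_bot" using E_bot' by (simp add: c_bot algebra_simps)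
  have c_le: "c \<le> km" using mult_nonneg_nonneg[of km "(cmod r)\<^sup>2"] km_pos by (simp add: c_bot algebra_simps)
  have u_top': "((\<lambda>x. u x - plane_wave kp \<tau> 0 x) \<longlongrightarrow> 0) at_top" using u_top by (simp add: plane_wave_def)
  have E_top: "(energy h u u' \<longlongrightarrow> 2 * c) at_top" and c_eq: "c = kp * (cmod \<tau>)\<^sup>2"
    using energy_limit[OF _ kp_pos h_pos h_top k2_top u_top' flux] by (auto simp: mult.assoc)
  obtain \<sigma> where sig: "\<forall>x. \<sigma> * h' x = \<bar>h' x\<bar>"
    and ln_var: "\<forall>x y. \<sigma> * (ln (h y) - ln (h x)) \<le> L"
    using monotone_log_gauge[OF h_mono h_pos dh h_bot h_top km_pos kp_pos] unfolding L_def by blast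
  have ch: "continuous_on UNIV h"
    using dh by (intro continuous_at_imp_continuous_on) (auto intro: DERIV_isCont)
  note mismatch = mismatch_on_intervals[OF k2_pc ch h_pos I_fin]
  have var: "potential c (energy h u u' x + e) \<le> potential c (energy h u u' y + e) + (L + I)"
    if "e > 0" "x \<le> y" for e x y
    using potential_variation[OF h_pos dh flux sig that mismatch(1)]
      ln_var[rule_format, of y x] mismatch(2)[of x y]
    unfolding I_def by linarith
  have "4 * km - 2 * c + sqrt ((4 * km - 2 * c)\<^sup>2 - 4 * c\<^sup>2) \<le> 2 * c * exp (L + I)"
    using c_eq c_le kp_pos by (intro potential_comparison_at_infinity[OF _ _ E_bot E_top var]) auto
  then have "c / km \<ge> (sech ((1/2) * L + (1/2) * I))\<^sup>2"
    using c_le km_pos by (intro sech_bound_from_energy_ends) (auto simp: L_def I_def)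
  then show ?thesis using c_eq by (simp add: L_def I_def)
qed

end
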